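(* For every integer $n\ge1$ there is a bijection $\Psi$ from the set of pairs $(F,\sigma)$, where $F$ is an admissible forest on $n$ leaves with $m$ connected components and $\sigma\in S_m$, to the set of admissible forests on $n+1$ leaves, such that $\deg(\Psi(F,\sigma))=\deg(F)+\operatorname{lec}(\sigma)$.
   Context: An admissible tree on $k$ leaves is a directed rooted tree whose $k$ leaves are labeled with distinct positive integers and whose every non-leaf vertex $v$ has $k_v\ge3$ outgoing edges (children) and is labeled $q^i$ with $i\in\{1,\dots,k_v-2\}$; the single vertex with no edges is the admissible tree on one leaf. Its degree is the sum of the exponents $i$ of the labels of non-leaf vertices. An admissible forest on $n$ leaves is a disjoint union of admissible trees whose sets of leaf labels partition $\{1,\dots,n\}$; its degree is the sum of the degrees of its trees. A permutation $\sigma\in S_m$ is written as the list $[\sigma(1),\dots,\sigma(m)]$. For a list of distinct numbers $\tau=[t_1,\dots,t_h]$, $\operatorname{inv}(\tau)=\{(i,j):i<j,\ t_i>t_j\}$. A hook is a list $[t_1,\dots,t_h]$ of distinct positive integers with $h\ge2$, $t_1>t_2$ and $t_2<t_3<\dots<t_h$. Every list of distinct numbers $\sigma$ has a unique factorization as a concatenation $\sigma=p\tau_1\cdots\tau_k$ with $p$ increasing (possibly empty) and each $\tau_i$ a hook ($k\ge0$); then $\operatorname{lec}(\sigma)=\sum_{i=1}^k|\operatorname{inv}(\tau_i)|$. *)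

theory Defs
  imports Main "HOL-Library.Multiset"
begin

text \<open>A tree is either a leaf carrying its (positive integer) label,
or an internal vertex labelled q^i (we store the exponent i) with an unordered
collection (multiset) of children. Structural equality is isomorphism of
leaf-labelled, vertex-labelled rooted trees.\<close>

datatype ltree = Leaf nat | Node nat "ltree multiset"

primrec leaves_m :: "ltree \<Rightarrow> nat multiset" where
  "leaves_m (Leaf a) = {#a#}"
| "leaves_m (Node i cs) = \<Sum>\<^sub># (image_mset leaves_m cs)"

primrec adm_shape :: "ltree \<Rightarrow> bool" where
  "adm_shape (Leaf a) = (1 \<le> a)"
| "adm_shape (Node i cs) =
     (3 \<le> size cs \<and> 1 \<le> i \<and> i \<le> size cs - 2 \<and> (\<forall>b\<in>#image_mset adm_shape cs. b))"

primrec tdeg :: "ltree \<Rightarrow> nat" where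
  "tdeg (Leaf a) = 0"
| "tdeg (Node i cs) = i + \<Sum>\<^sub># (image_mset tdeg cs)"

definition leaves :: "ltree \<Rightarrow> nat set" where
  "leaves t = set_mset (leaves_m t)"

definition admissible_tree :: "ltree \<Rightarrow> bool" where
  "admissible_tree t \<longleftrightarrow> adm_shape t \<and> (\<forall>a. count (leaves_m t) a \<le> 1)"

definition admissible_forests :: "nat \<Rightarrow> ltree set set" where
  "admissible_forests n = {F. finite F \<and> (\<forall>t\<in>F. admissible_tree t)
      \<and> (\<forall>t\<in>F. \<forall>u\<in>F. t \<noteq> u \<longrightarrow> leaves t \<inter> leaves u = {})
      \<and> (\<Union>t\<in>F. leaves t) = {1..n}}"

definition fdeg :: "ltree set \<Rightarrow> nat" where
  "fdeg F = (\<Sum>t\<in>F. tdeg t)"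

text \<open>Permutations of S_m written as lists [sigma(1),...,sigma(m)].\<close>

definition perms :: "nat \<Rightarrow> nat list set" where
  "perms m = {s. distinct s \<and> set s = {1..m}}"

definition inv_set :: "nat list \<Rightarrow> (nat \<times> nat) set" where
  "inv_set t = {(i, j). i < j \<and> j < length t \<and> t ! i > t ! j}"

definition is_hook :: "nat list \<Rightarrow> bool" where
  "is_hook t \<longleftrightarrow> distinct t \<and> (\<forall>x\<in>set t. 1 \<le> x) \<and> 2 \<le> length t \<and> t ! 0 > t ! 1
      \<and> sorted_wrt (<) (tl t)"

definition hook_factorization :: "nat list \<Rightarrow> nat list \<Rightarrow> nat list list \<Rightarrow> bool" where
  "hook_factorization s p ts \<longleftrightarrow> s = p @ concat ts \<and> sorted_wrt (<) p \<and> (\<forall>t\<in>set ts. is_hook t)"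

definition lec :: "nat list \<Rightarrow> nat" where
  "lec s = (THE k. \<exists>p ts. hook_factorization s p ts \<and> k = (\<Sum>t\<leftarrow>ts. card (inv_set t)))"

end

(*
  A permutation s of the m trees of F factors uniquely as p t_1 ... t_k with p increasing
  and each t_j a hook, and a hook is determined by its set S_j of letters together with
  its number i_j of inversions, which can be any value with 1 <= i_j < |S_j|.  So s amounts
  to a list of disjoint blocks S_j of trees of F, each marked by such an i_j, and
  lec s = i_1 + ... + i_k.  Such a list is turned into a path hanging from the new leaf n+1:
  the j-th vertex, counted from the root, carries the label q^(i_j) and has as children the
  trees of S_j and the rest of the path, hence |S_j| + 1 >= 3 children and
  1 <= i_j <= (|S_j| + 1) - 2.  The degree grows by exactly i_1 + ... + i_k.  Conversely,
  the path from leaf n+1 to the root of its tree recovers the marked blocks, which makes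
  the construction a bijection.
*)

theory Submission
  imports Defs "HOL-Library.Disjoint_Sets"
begin

section \<open>Hooks\<close>

lemma card_less_nth_sorted:
  fixes xs :: "'a::linorder list"
  assumes "sorted_wrt (<) xs" "j < length xs"
  shows "card {x \<in> set xs. x < xs ! j} = j"
proof -
  have "{x \<in> set xs. x < xs ! j} = set (take j xs)"
  proof (intro equalityI subsetI)
    fix x
    assume "x \<in> {x \<in> set xs. x < xs ! j}"
    then obtain k where "k < length xs" "x = xs ! k" "xs ! k < xs ! j"
      by (auto simp: in_set_conv_nth)
    moreover from this have "k < j"
      using sorted_wrt_nth_less[OF assms(1), of j k]
      by (cases "j < k") (auto simp: linorder_not_less le_less)
    ultimately show "x \<in> set (take j xs)"
      by (auto simp: in_set_conv_nth)
  next
    fix x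
    assume "x \<in> set (take j xs)"
    then obtain k where "k < j" "x = xs ! k"
      using assms(2) by (auto simp: in_set_conv_nth)
    then show "x \<in> {x \<in> set xs. x < xs ! j}"
      using sorted_wrt_nth_less[OF assms(1)] assms(2) by auto
  qed
  moreover have "distinct xs"
    using assms(1) strict_sorted_iff by blast
  ultimately show ?thesis
    using assms(2) by (simp add: distinct_card)
qed

lemma inv_set_Cons_sorted:
  fixes xs :: "nat list"
  assumes "sorted_wrt (<) xs"
  shows "inv_set (a # xs) = (\<lambda>k. (0, Suc k)) ` {k. k < length xs \<and> xs ! k < a}"
proof (intro equalityI subsetI)
  fix p
  assume p: "p \<in> inv_set (a # xs)"
  then obtain i j where ij: "p = (i, j)" "i < j" "j < Suc (length xs)" "(a # xs) ! j < (a # xs) ! i"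
    by (auto simp: inv_set_def)
  obtain j' where j': "j = Suc j'"
    using ij(2) by (cases j) auto
  have "i = 0"
  proof (rule ccontr)
    assume "i \<noteq> 0"
    then obtain i' where "i = Suc i'"
      by (cases i) auto
    then show False
      using sorted_wrt_nth_less[OF assms, of i' j'] ij j' by simp
  qed
  then show "p \<in> (\<lambda>k. (0, Suc k)) ` {k. k < length xs \<and> xs ! k < a}"
    using ij j' by auto
qed (auto simp: inv_set_def)

lemma card_inv_set_Cons_sorted:
  fixes xs :: "nat list"
  assumes "sorted_wrt (<) xs"
  shows "card (inv_set (a # xs)) = card {x \<in> set xs. x < a}"
proof -
  have "card (inv_set (a # xs)) = card {k. k < length xs \<and> xs ! k < a}"
    by (simp add: inv_set_Cons_sorted[OF assms] card_image inj_on_def)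
  also have "\<dots> = card ((!) xs ` {k. k < length xs \<and> xs ! k < a})"
    using assms strict_sorted_iff[of xs]
    by (intro card_image[symmetric] inj_onI) (auto simp: nth_eq_iff_index_eq)
  also have "(!) xs ` {k. k < length xs \<and> xs ! k < a} = {x \<in> set xs. x < a}"
    by (auto simp: in_set_conv_nth)
  finally show ?thesis .
qed

lemma is_hookE:
  assumes "is_hook t"
  obtains a b xs where "t = a # b # xs" "b < a" "sorted_wrt (<) (b # xs)"
  using assms unfolding is_hook_def by (cases t; cases "tl t") auto

text \<open>The first letter of \<^term>\<open>hook_of (S, i)\<close> is the element of \<^term>\<open>S\<close> with exactly
  \<^term>\<open>i\<close> smaller elements, all of which follow it; so the hook has \<^term>\<open>i\<close> inversions.\<close>

definition hook_of :: "nat set \<times> nat \<Rightarrow> nat list" where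
  "hook_of = (\<lambda>(S, i). let a = sorted_list_of_set S ! i in a # sorted_list_of_set (S - {a}))"

definition hook_data :: "nat list \<Rightarrow> nat set \<times> nat" where
  "hook_data t = (set t, card (inv_set t))"

lemma hook_of_is_hook:
  assumes "finite S" "0 \<notin> S" "1 \<le> i" "i < card S"
  shows "is_hook (hook_of (S, i))" "hook_data (hook_of (S, i)) = (S, i)"
proof -
  define xs where "xs = sorted_list_of_set S"
  define a where "a = xs ! i"
  have xs: "sorted_wrt (<) xs" "set xs = S" "length xs = card S"
    using assms(1) by (simp_all add: xs_def)
  have "a \<in> S"
    using xs assms(4) by (auto simp: a_def)
  have hook: "hook_of (S, i) = a # sorted_list_of_set (S - {a})"
    by (simp add: hook_of_def xs_def a_def Let_def)
  have "xs ! 0 < a"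
    using sorted_wrt_nth_less[OF xs(1), of 0 i] xs(3) assms(3,4) by (simp add: a_def)
  moreover have "xs ! 0 \<in> S - {a}"
    using calculation xs assms(4) nth_mem[of 0 xs] by auto
  ultimately have "Min (S - {a}) < a"
    using assms(1) by (meson Min_le finite_Diff le_less_trans)
  have "sorted_list_of_set (S - {a}) =
      Min (S - {a}) # sorted_list_of_set (S - {a} - {Min (S - {a})})"
    using \<open>xs ! 0 \<in> S - {a}\<close> assms(1) sorted_list_of_set_nonempty[of "S - {a}"] by blast
  then have second: "hook_of (S, i) ! 1 = Min (S - {a})" "2 \<le> length (hook_of (S, i))"
    unfolding hook by simp_all
  have "{x \<in> set (sorted_list_of_set (S - {a})). x < a} = {x \<in> set xs. x < xs ! i}"
    using assms(1) xs(2) by (auto simp: a_def)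
  then have "card (inv_set (hook_of (S, i))) = i"
    using hook card_inv_set_Cons_sorted[of "sorted_list_of_set (S - {a})" a]
      card_less_nth_sorted[OF xs(1)] xs(3) assms(4) by simp
  moreover have "set (hook_of (S, i)) = S"
    using hook \<open>a \<in> S\<close> assms(1) by auto
  ultimately show "hook_data (hook_of (S, i)) = (S, i)"
    by (simp add: hook_data_def)
  show "is_hook (hook_of (S, i))"
  proof -
    have "\<forall>x\<in>S. 1 \<le> x"
      using assms(2) by (metis One_nat_def Suc_leI gr0I)
    moreover have "distinct (hook_of (S, i))" "sorted_wrt (<) (tl (hook_of (S, i)))"
      using assms(1) by (simp_all add: hook)
    ultimately show ?thesis
      unfolding is_hook_def using second \<open>Min (S - {a}) < a\<close> \<open>set (hook_of (S, i)) = S\<close>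
      by (simp add: hook)
  qed
qed

lemma hook_of_hook_data:
  assumes "is_hook t"
  shows "hook_of (hook_data t) = t"
proof -
  obtain a xs where t: "t = a # xs" "sorted_wrt (<) xs" "a \<notin> set xs"
    using assms unfolding is_hook_def by (cases t) auto
  define ys where "ys = sorted_list_of_set (set t)"
  have ys: "sorted_wrt (<) ys" "set ys = set t"
    by (simp_all add: ys_def)
  obtain j where j: "j < length ys" "ys ! j = a"
    using ys(2) t(1) by (metis in_set_conv_nth list.set_intros(1))
  have "card (inv_set t) = card {x \<in> set xs. x < a}"
    using card_inv_set_Cons_sorted[OF t(2)] t(1) by simp
  also have "{x \<in> set xs. x < a} = {x \<in> set ys. x < ys ! j}"
    using j ys t by auto
  finally have "card (inv_set t) = j"
    using card_less_nth_sorted[OF ys(1) j(1)] by simp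
  moreover have "set t - {a} = set xs"
    using t by auto
  ultimately show ?thesis
    using j t(1,2) ys_def
    by (simp add: hook_of_def hook_data_def Let_def sorted_list_of_set.idem_if_sorted_distinct
        strict_sorted_iff)
qed

lemma hook_data_bounds:
  assumes "is_hook t"
  shows "1 \<le> card (inv_set t)" "card (inv_set t) < card (set t)"
proof -
  obtain a b xs where t: "t = a # b # xs" "b < a" "sorted_wrt (<) (b # xs)"
    using assms by (rule is_hookE)
  have "distinct t"
    using assms by (simp add: is_hook_def)
  have ci: "card (inv_set t) = card {x \<in> set (b # xs). x < a}"
    using card_inv_set_Cons_sorted t by simp
  have "b \<in> {x \<in> set (b # xs). x < a}"
    using t(2) by simp
  then have "card {x \<in> set (b # xs). x < a} \<noteq> 0"
    by (auto simp: card_eq_0_iff)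
  then show "1 \<le> card (inv_set t)"
    unfolding ci by linarith
  have "card {x \<in> set (b # xs). x < a} \<le> card (set (b # xs))"
    by (intro card_mono) auto
  also have "\<dots> < card (set t)"
    using \<open>distinct t\<close> t(1) by (simp add: distinct_card)
  finally show "card (inv_set t) < card (set t)"
    unfolding ci .
qed

section \<open>Hook factorizations\<close>

lemma hook_not_in_sorted: "is_hook t \<Longrightarrow> \<not> sorted_wrt (<) (xs @ t @ ys)"
  by (erule is_hookE) (auto simp: sorted_wrt_append)

lemma hook_suffix_eq:
  assumes eq: "xs @ t = ys @ u" and hooks: "is_hook t" "is_hook u"
  shows "t = u"
proof -
  have no_longer: "\<not> length t < length u"
    if eq': "xs @ t = ys @ u" and ht: "is_hook t" and hu: "is_hook u" for xs t ys u
  proof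
    assume len: "length t < length u"
    obtain v where "xs = ys @ v \<and> v @ t = u \<or> xs @ v = ys \<and> t = v @ u"
      using append_eq_append_conv2[THEN iffD1, OF eq'] by blast
    with len have "u = v @ t" "v \<noteq> []"
      by auto
    then obtain v' where "tl u = v' @ t @ []"
      by (cases v) auto
    moreover obtain a b zs where "u = a # b # zs" "sorted_wrt (<) (b # zs)"
      using hu by (rule is_hookE)
    ultimately show False
      using hook_not_in_sorted[OF ht, of v' "[]"] by simp
  qed
  have "length t = length u"
    using no_longer[OF eq hooks] no_longer[OF eq[symmetric] hooks(2,1)] by simp
  then show ?thesis
    using eq by simp
qed

lemma hook_factorization_Nil: "hook_factorization s p [] \<longleftrightarrow> s = p \<and> sorted_wrt (<) p"
  by (auto simp: hook_factorization_def)

lemma hook_factorization_snoc: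
  "hook_factorization s p (ts @ [t]) \<longleftrightarrow>
     (\<exists>s'. s = s' @ t \<and> is_hook t \<and> hook_factorization s' p ts)"
  by (auto simp: hook_factorization_def)

lemma hook_factorization_unique:
  "hook_factorization s p ts \<Longrightarrow> hook_factorization s p' ts' \<Longrightarrow> p = p' \<and> ts = ts'"
proof (induction ts arbitrary: s ts' rule: rev_induct)
  case Nil
  then have s: "s = p" "sorted_wrt (<) p"
    by (simp_all add: hook_factorization_Nil)
  show ?case
  proof (cases ts' rule: rev_exhaust)
    case Nil
    then show ?thesis
      using s Nil.prems(2) by (simp add: hook_factorization_Nil)
  next
    case (snoc ts'' t')
    then obtain s1' where "s = s1' @ t'" "is_hook t'"
      using Nil.prems(2) by (auto simp: hook_factorization_snoc)
    then show ?thesis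
      using s hook_not_in_sorted[of t' s1' "[]"] by simp
  qed
next
  case (snoc t ts)
  obtain s1 where s1: "s = s1 @ t" "is_hook t" "hook_factorization s1 p ts"
    using snoc.prems(1) by (auto simp: hook_factorization_snoc)
  show ?case
  proof (cases ts' rule: rev_exhaust)
    case Nil
    then show ?thesis
      using snoc.prems(2) s1 hook_not_in_sorted[of t s1 "[]"] by (simp add: hook_factorization_Nil)
  next
    case (snoc ts'' t')
    then obtain s1' where s1': "s = s1' @ t'" "is_hook t'" "hook_factorization s1' p' ts''"
      using snoc.prems(2) by (auto simp: hook_factorization_snoc)
    then have "t = t'"
      using hook_suffix_eq[of s1 t s1' t'] s1 by simp
    then show ?thesis
      using snoc.IH[of s1 ts''] s1 s1' snoc by simp
  qed
qed

lemma lec_hook_factorization: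
  "hook_factorization s p ts \<Longrightarrow> lec s = (\<Sum>t\<leftarrow>ts. card (inv_set t))"
  unfolding lec_def by (rule the_equality) (auto dest: hook_factorization_unique)

lemma hook_factorization_exists:
  assumes "distinct s" "0 \<notin> set s"
  shows "\<exists>p ts. hook_factorization s p ts"
  using assms
proof (induction "length s" arbitrary: s rule: less_induct)
  case less
  have desc_iff: "\<not> s ! i < s ! Suc i \<longleftrightarrow> s ! Suc i < s ! i" if "Suc i < length s" for i
    using that nth_eq_iff_index_eq[OF less.prems(1), of i "Suc i"] by auto
  show ?case
  proof (cases "sorted_wrt (<) s")
    case True
    then show ?thesis
      using hook_factorization_Nil by blast
  next
    case False
    define D where "D = {i. Suc i < length s \<and> s ! Suc i < s ! i}"
    have "D \<noteq> {}"
      using False desc_iff unfolding D_def sorted_wrt_iff_nth_Suc_transp[OF transp_on_less] by auto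
    moreover have "finite D"
      unfolding D_def by (rule finite_subset[of _ "{..<length s}"]) auto
    ultimately have j: "Suc j < length s" "s ! Suc j < s ! j" and last: "\<And>i. i \<in> D \<Longrightarrow> i \<le> j"
      if "j = Max D" for j
      using that Max_in[of D] by (auto simp: D_def)
    define j where "j = Max D"
    define t where "t = drop j s"
    have "sorted_wrt (<) (drop (Suc j) s)"
      unfolding sorted_wrt_iff_nth_Suc_transp[OF transp_on_less]
    proof (intro allI impI)
      fix k
      assume "Suc k < length (drop (Suc j) s)"
      moreover have "Suc j + k \<notin> D"
        using last[OF j_def] by fastforce
      ultimately show "drop (Suc j) s ! k < drop (Suc j) s ! Suc k"
        using desc_iff[of "Suc j + k"] by (simp add: D_def)
    qed
    moreover have "tl t = drop (Suc j) s" "t ! 0 = s ! j" "t ! 1 = s ! Suc j" "2 \<le> length t"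
      using j[OF j_def] by (simp_all add: t_def drop_Suc tl_drop)
    moreover have "distinct t" "0 \<notin> set t"
      using less.prems by (auto simp: t_def dest: in_set_dropD)
    ultimately have "is_hook t"
      using j[OF j_def] unfolding is_hook_def by (metis One_nat_def Suc_leI gr0I)
    moreover obtain p ts where "hook_factorization (take j s) p ts"
      using less.hyps[of "take j s"] less.prems j[OF j_def] by (auto dest: in_set_takeD)
    ultimately have "hook_factorization s p (ts @ [t])"
      unfolding hook_factorization_snoc t_def by (metis append_take_drop_id)
    then show ?thesis
      by blast
  qed
qed

section \<open>Permutations as marked blocks\<close>

text \<open>Pairwise disjoint blocks \<^term>\<open>S \<subseteq> X\<close>, each with a mark \<^term>\<open>1 \<le> i \<and> i < card S\<close>:
  the letter sets and inversion numbers of the hooks of a permutation, and equally the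
  off-spine children and labels of the vertices along a spine.\<close>

fun marked_blocks :: "('a set \<times> nat) list \<Rightarrow> 'a set \<Rightarrow> bool" where
  "marked_blocks [] X \<longleftrightarrow> True"
| "marked_blocks ((S, i) # bs) X \<longleftrightarrow>
     S \<subseteq> X \<and> 2 \<le> card S \<and> 1 \<le> i \<and> i < card S \<and> marked_blocks bs (X - S)"

definition blocks_union :: "('a set \<times> nat) list \<Rightarrow> 'a set" where
  "blocks_union bs = \<Union>(fst ` set bs)"

lemma blocks_union_simps [simp]:
  "blocks_union [] = {}"
  "blocks_union ((S, i) # bs) = S \<union> blocks_union bs"
  by (simp_all add: blocks_union_def)

lemma marked_blocks_subset: "marked_blocks bs X \<Longrightarrow> blocks_union bs \<subseteq> X"
  by (induction bs X rule: marked_blocks.induct) auto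

lemma marked_blocks_mono: "marked_blocks bs X \<Longrightarrow> X \<subseteq> Y \<Longrightarrow> marked_blocks bs Y"
proof (induction bs X arbitrary: Y rule: marked_blocks.induct)
  case (2 S i bs X)
  then show ?case by (auto intro: "2.IH"[of "Y - S"])
qed simp

lemma marked_blocks_block:
  "marked_blocks bs X \<Longrightarrow> (S, i) \<in> set bs \<Longrightarrow> S \<subseteq> X \<and> 2 \<le> card S \<and> 1 \<le> i \<and> i < card S"
  by (induction bs X rule: marked_blocks.induct) auto

lemma marked_blocks_finite: "marked_blocks bs X \<Longrightarrow> S \<in> fst ` set bs \<Longrightarrow> finite S"
  using marked_blocks_block by (fastforce intro: card_ge_0_finite)

lemma marked_blocks_finite_union: "marked_blocks bs X \<Longrightarrow> finite (blocks_union bs)"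
  unfolding blocks_union_def using marked_blocks_finite by blast

definition perm_of_blocks :: "nat \<Rightarrow> (nat set \<times> nat) list \<Rightarrow> nat list" where
  "perm_of_blocks m hs = sorted_list_of_set ({1..m} - blocks_union hs) @ concat (map hook_of hs)"

lemma hook_data_hook_of_marked_blocks:
  assumes "marked_blocks hs X" "0 \<notin> X"
  shows "map (hook_data \<circ> hook_of) hs = hs"
proof (rule map_idI)
  fix h
  assume "h \<in> set hs"
  moreover obtain S i where "h = (S, i)"
    by fastforce
  ultimately have "finite S" "0 \<notin> S" "1 \<le> i" "i < card S"
    using marked_blocks_block[OF assms(1), of S i] assms(2) by (auto intro: card_ge_0_finite)
  then show "(hook_data \<circ> hook_of) h = h"
    using hook_of_is_hook(2) \<open>h = (S, i)\<close> by simp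
qed

lemma hooks_of_marked_blocks:
  "marked_blocks hs X \<Longrightarrow> 0 \<notin> X \<Longrightarrow>
    distinct (concat (map hook_of hs)) \<and> set (concat (map hook_of hs)) = blocks_union hs \<and>
    (\<forall>t\<in>set (map hook_of hs). is_hook t)"
proof (induction hs X rule: marked_blocks.induct)
  case (2 S i bs X)
  have "finite S" "0 \<notin> S"
    using "2.prems" by (auto intro: card_ge_0_finite)
  then have hook: "is_hook (hook_of (S, i))" "hook_data (hook_of (S, i)) = (S, i)"
    using hook_of_is_hook "2.prems"(1) by auto
  then have "distinct (hook_of (S, i))" "set (hook_of (S, i)) = S"
    by (simp_all add: is_hook_def hook_data_def)
  moreover have "blocks_union bs \<inter> S = {}"
    using marked_blocks_subset[of bs "X - S"] "2.prems" by auto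
  ultimately show ?case
    using "2.IH" "2.prems" hook(1) by auto
qed simp

lemma marked_blocks_hook_data:
  "distinct (concat ts) \<Longrightarrow> set (concat ts) \<subseteq> X \<Longrightarrow> \<forall>t\<in>set ts. is_hook t \<Longrightarrow>
     marked_blocks (map hook_data ts) X"
proof (induction ts arbitrary: X)
  case (Cons t ts)
  then have "1 \<le> card (inv_set t)" "card (inv_set t) < card (set t)"
    using hook_data_bounds by auto
  moreover have "marked_blocks (map hook_data ts) (X - set t)"
    using Cons by (intro Cons.IH) auto
  ultimately show ?case
    using Cons.prems by (simp add: hook_data_def[of t])
qed simp

lemma blocks_union_hook_data: "blocks_union (map hook_data ts) = set (concat ts)"
  by (auto simp: blocks_union_def hook_data_def)

lemma perm_of_blocks_factorization:
  assumes "marked_blocks hs {1..m}"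
  shows "hook_factorization (perm_of_blocks m hs)
    (sorted_list_of_set ({1..m} - blocks_union hs)) (map hook_of hs)"
  using hooks_of_marked_blocks[OF assms]
  by (simp add: hook_factorization_def perm_of_blocks_def)

lemma lec_perm_of_blocks:
  assumes "marked_blocks hs {1..m}"
  shows "lec (perm_of_blocks m hs) = sum_list (map snd hs)"
proof -
  have "lec (perm_of_blocks m hs) = sum_list (map snd (map (hook_data \<circ> hook_of) hs))"
    using lec_hook_factorization[OF perm_of_blocks_factorization[OF assms]]
    by (simp add: hook_data_def comp_def)
  also have "map (hook_data \<circ> hook_of) hs = hs"
    using hook_data_hook_of_marked_blocks[OF assms] by simp
  finally show ?thesis .
qed

lemma bij_betw_perm_of_blocks:
  "bij_betw (perm_of_blocks m) {hs. marked_blocks hs {1..m}} (perms m)"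
proof (rule bij_betw_imageI)
  show "inj_on (perm_of_blocks m) {hs. marked_blocks hs {1..m}}"
  proof (rule inj_onI)
    fix hs hs'
    assume "hs \<in> {hs. marked_blocks hs {1..m}}" "hs' \<in> {hs. marked_blocks hs {1..m}}"
    then have hs: "marked_blocks hs {1..m}" and hs': "marked_blocks hs' {1..m}"
      by simp_all
    assume eq: "perm_of_blocks m hs = perm_of_blocks m hs'"
    have "map hook_of hs = map hook_of hs'"
      using hook_factorization_unique perm_of_blocks_factorization[OF hs]
        perm_of_blocks_factorization[OF hs'] eq by metis
    then show "hs = hs'"
      using hook_data_hook_of_marked_blocks[OF hs] hook_data_hook_of_marked_blocks[OF hs']
      by (simp flip: map_map)
  qed
  show "perm_of_blocks m ` {hs. marked_blocks hs {1..m}} = perms m"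
  proof (intro equalityI subsetI)
    fix s
    assume "s \<in> perm_of_blocks m ` {hs. marked_blocks hs {1..m}}"
    then obtain hs where hs: "marked_blocks hs {1..m}" "s = perm_of_blocks m hs"
      by blast
    then show "s \<in> perms m"
      using hooks_of_marked_blocks[OF hs(1)] marked_blocks_subset[OF hs(1)]
      by (auto simp: perms_def perm_of_blocks_def)
  next
    fix s
    assume "s \<in> perms m"
    then have s: "distinct s" "set s = {1..m}"
      by (simp_all add: perms_def)
    then obtain p ts where pts: "hook_factorization s p ts"
      using hook_factorization_exists by fastforce
    then have pts': "s = p @ concat ts" "sorted_wrt (<) p" "\<forall>t\<in>set ts. is_hook t"
      by (simp_all add: hook_factorization_def)
    define hs where "hs = map hook_data ts"
    have "marked_blocks hs {1..m}"
      unfolding hs_def using s pts' by (intro marked_blocks_hook_data) auto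
    moreover have "map hook_of hs = ts"
      unfolding hs_def using pts'(3) by (simp add: map_idI hook_of_hook_data)
    moreover have "{1..m} - blocks_union hs = set p"
      using s pts'(1) by (auto simp: hs_def blocks_union_hook_data)
    then have "sorted_list_of_set ({1..m} - blocks_union hs) = p"
      using pts'(2) by (simp add: sorted_list_of_set.idem_if_sorted_distinct strict_sorted_iff)
    ultimately show "s \<in> perm_of_blocks m ` {hs. marked_blocks hs {1..m}}"
      using pts'(1) by (force simp: perm_of_blocks_def)
  qed
qed

definition relabel_blocks :: "('a \<Rightarrow> 'b) \<Rightarrow> ('a set \<times> nat) list \<Rightarrow> ('b set \<times> nat) list" where
  "relabel_blocks e = map (apfst ((`) e))"

lemma marked_blocks_relabel:
  "inj_on e X \<Longrightarrow> marked_blocks hs X \<Longrightarrow> marked_blocks (relabel_blocks e hs) (e ` X)"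
proof (induction hs X rule: marked_blocks.induct)
  case (2 S i bs X)
  then have "inj_on e (X - S)" "e ` (X - S) = e ` X - e ` S" "card (e ` S) = card S"
    by (auto simp: inj_on_image_set_diff card_image inj_on_subset)
  with 2 show ?case
    by (auto simp: relabel_blocks_def)
qed (simp add: relabel_blocks_def)

lemma relabel_blocks_inverse:
  "(\<And>x. x \<in> blocks_union hs \<Longrightarrow> e' (e x) = x) \<Longrightarrow> relabel_blocks e' (relabel_blocks e hs) = hs"
  by (induction hs) (auto simp: relabel_blocks_def image_image blocks_union_def)

lemma sum_snd_relabel_blocks: "sum_list (map snd (relabel_blocks e hs)) = sum_list (map snd hs)"
  by (simp add: relabel_blocks_def)

lemma bij_betw_relabel_blocks:
  assumes "bij_betw e A B"
  shows "bij_betw (relabel_blocks e) {hs. marked_blocks hs A} {hs. marked_blocks hs B}"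
proof (rule bij_betw_byWitness[where f' = "relabel_blocks (inv_into A e)"])
  have e: "inj_on e A" "e ` A = B" and e': "inj_on (inv_into A e) B" "inv_into A e ` B = A"
    using assms bij_betw_inv_into[OF assms] by (auto simp: bij_betw_def)
  show "\<forall>hs\<in>{hs. marked_blocks hs A}. relabel_blocks (inv_into A e) (relabel_blocks e hs) = hs"
    using marked_blocks_subset e(1) by (blast intro: relabel_blocks_inverse inv_into_f_f)
  show "\<forall>hs\<in>{hs. marked_blocks hs B}. relabel_blocks e (relabel_blocks (inv_into A e) hs) = hs"
    using marked_blocks_subset e(2) by (blast intro: relabel_blocks_inverse f_inv_into_f)
  show "relabel_blocks e ` {hs. marked_blocks hs A} \<subseteq> {hs. marked_blocks hs B}"
    using marked_blocks_relabel[OF e(1)] e(2) by blast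
  show "relabel_blocks (inv_into A e) ` {hs. marked_blocks hs B} \<subseteq> {hs. marked_blocks hs A}"
    using marked_blocks_relabel[OF e'(1)] unfolding e'(2) by blast
qed

lemma perms_marked_blocks_bij:
  assumes "finite X"
  obtains g where "bij_betw g (perms (card X)) {hs. marked_blocks hs X}"
    "\<And>s. s \<in> perms (card X) \<Longrightarrow> sum_list (map snd (g s)) = lec s"
proof -
  let ?P = "{hs. marked_blocks hs {1..card X}}"
  obtain e where e: "bij_betw e {1..card X} X"
    using ex_bij_betw_nat_finite_1[OF assms] by blast
  define g where "g = relabel_blocks e \<circ> inv_into ?P (perm_of_blocks (card X))"
  have inv: "bij_betw (inv_into ?P (perm_of_blocks (card X))) (perms (card X)) ?P"
    using bij_betw_inv_into[OF bij_betw_perm_of_blocks] .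
  have "bij_betw g (perms (card X)) {hs. marked_blocks hs X}"
    unfolding g_def using bij_betw_trans[OF inv bij_betw_relabel_blocks[OF e]] .
  moreover have "sum_list (map snd (g s)) = lec s" if "s \<in> perms (card X)" for s
  proof -
    let ?hs = "inv_into ?P (perm_of_blocks (card X)) s"
    have "s \<in> perm_of_blocks (card X) ` ?P"
      using that bij_betw_perm_of_blocks[of "card X"] by (simp add: bij_betw_def)
    then have "?hs \<in> ?P" "perm_of_blocks (card X) ?hs = s"
      by (rule inv_into_into, rule f_inv_into_f)
    then show ?thesis
      using lec_perm_of_blocks[of ?hs "card X"] by (simp add: g_def sum_snd_relabel_blocks)
  qed
  ultimately show ?thesis
    using that by blast
qed

section \<open>Admissible trees\<close>

definition distinct_mset :: "'a multiset \<Rightarrow> bool" where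
  "distinct_mset M \<longleftrightarrow> (\<forall>a. count M a \<le> 1)"

lemma distinct_mset_add:
  "distinct_mset (M + N) \<longleftrightarrow> distinct_mset M \<and> distinct_mset N \<and> set_mset M \<inter> set_mset N = {}"
proof -
  have "count M a + count N a \<le> 1 \<longleftrightarrow> count M a \<le> 1 \<and> count N a \<le> 1 \<and> \<not> (a \<in># M \<and> a \<in># N)"
    for a
    using count_eq_zero_iff[of M a] count_eq_zero_iff[of N a] by arith
  then show ?thesis
    unfolding distinct_mset_def count_union by blast
qed

lemma distinct_mset_add_mset: "distinct_mset (add_mset a M) \<longleftrightarrow> a \<notin># M \<and> distinct_mset M"
  using distinct_mset_add[of "{#a#}" M] by (auto simp: distinct_mset_def)

lemma distinct_mset_mset_set: "distinct_mset (mset_set A)"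
  by (simp add: distinct_mset_def count_mset_set')

lemma mset_set_set_mset: "distinct_mset M \<Longrightarrow> mset_set (set_mset M) = M"
  by (rule multiset_eqI) (metis distinct_mset_def count_greater_eq_one_iff count_inI
      count_mset_set(1,3) finite_set_mset nle_le)

lemma distinct_mset_sum_image_mset:
  assumes "\<forall>c\<in>#M. f c \<noteq> {#}"
  shows "distinct_mset (\<Sum>\<^sub># (image_mset f M)) \<longleftrightarrow>
    distinct_mset M \<and> (\<forall>c\<in>#M. distinct_mset (f c)) \<and> disjoint_family_on (set_mset \<circ> f) (set_mset M)"
  using assms
proof (induction M)
  case empty
  then show ?case by (simp add: distinct_mset_def disjoint_family_on_def)
next
  case (add a M)
  have rest: "set_mset (\<Sum>\<^sub># (image_mset f M)) = (\<Union>c\<in>set_mset M. set_mset (f c))"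
    by (induction M) auto
  show ?case
  proof (cases "a \<in># M")
    case True
    then have "set_mset (f a) \<inter> set_mset (\<Sum>\<^sub># (image_mset f M)) \<noteq> {}"
      using add.prems unfolding rest by auto
    then show ?thesis using True by (simp add: distinct_mset_add distinct_mset_add_mset)
  next
    case False
    then show ?thesis
      using add
      by (auto simp: distinct_mset_add distinct_mset_add_mset disjoint_family_on_insert rest)
  qed
qed

lemma disjoint_family_on_Un:
  assumes "A \<inter> B = {}"
  shows "disjoint_family_on f (A \<union> B) \<longleftrightarrow>
    disjoint_family_on f A \<and> disjoint_family_on f B \<and> \<Union>(f ` A) \<inter> \<Union>(f ` B) = {}"
  using assms unfolding disjoint_family_on_def
  by (auto 4 3) (metis IntI Un_iff disjoint_iff empty_iff)

lemma leaves_Leaf [simp]: "leaves (Leaf a) = {a}"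
  by (simp add: leaves_def)

lemma leaves_Node [simp]: "leaves (Node i cs) = (\<Union>c\<in>set_mset cs. leaves c)"
  by (induction cs) (auto simp: leaves_def)

lemma leaves_nonempty: "adm_shape t \<Longrightarrow> leaves t \<noteq> {}"
proof (induction t)
  case (Node i cs)
  then obtain c where "c \<in># cs"
    by (metis adm_shape.simps(2) multiset_nonemptyE not_numeral_le_zero size_empty)
  with Node show ?case by auto
qed simp

lemma admissible_tree_distinct_mset: "admissible_tree t \<longleftrightarrow> adm_shape t \<and> distinct_mset (leaves_m t)"
  by (simp add: admissible_tree_def distinct_mset_def)

lemma admissible_tree_Leaf [simp]: "admissible_tree (Leaf a) \<longleftrightarrow> 1 \<le> a"
  by (simp add: admissible_tree_def)

lemma admissible_tree_Node:
  "admissible_tree (Node i cs) \<longleftrightarrow>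
    3 \<le> size cs \<and> 1 \<le> i \<and> i \<le> size cs - 2 \<and> distinct_mset cs \<and>
    (\<forall>c\<in>#cs. admissible_tree c) \<and> disjoint_family_on leaves (set_mset cs)"
proof (cases "\<forall>c\<in>#cs. adm_shape c")
  case True
  then have "\<forall>c\<in>#cs. leaves_m c \<noteq> {#}"
    using leaves_nonempty by (force simp: leaves_def)
  moreover have "set_mset \<circ> leaves_m = leaves"
    by (simp add: fun_eq_iff leaves_def)
  ultimately show ?thesis
    using True by (auto simp: admissible_tree_distinct_mset distinct_mset_sum_image_mset)
qed (auto simp: admissible_tree_def)

definition admissible_family :: "ltree set \<Rightarrow> bool" where
  "admissible_family X \<longleftrightarrow> (\<forall>t\<in>X. admissible_tree t) \<and> disjoint_family_on leaves X"

lemma admissible_forests_iff: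
  "F \<in> admissible_forests n \<longleftrightarrow> finite F \<and> admissible_family F \<and> \<Union>(leaves ` F) = {1..n}"
  by (auto simp: admissible_forests_def admissible_family_def disjoint_family_on_def)

lemma admissible_family_Un:
  "A \<inter> B = {} \<Longrightarrow> admissible_family (A \<union> B) \<longleftrightarrow>
     admissible_family A \<and> admissible_family B \<and> \<Union>(leaves ` A) \<inter> \<Union>(leaves ` B) = {}"
  by (auto simp: admissible_family_def disjoint_family_on_Un)

lemma admissible_family_insert:
  "t \<notin> X \<Longrightarrow> admissible_family (insert t X) \<longleftrightarrow>
     admissible_tree t \<and> admissible_family X \<and> leaves t \<inter> \<Union>(leaves ` X) = {}"
  by (auto simp: admissible_family_def disjoint_family_on_insert)

section \<open>Spines\<close>

fun spine :: "nat \<Rightarrow> (ltree set \<times> nat) list \<Rightarrow> ltree" where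
  "spine x [] = Leaf x"
| "spine x ((S, i) # bs) = Node i (add_mset (spine x bs) (mset_set S))"

lemma leaves_spine:
  "marked_blocks bs X \<Longrightarrow> leaves (spine x bs) = insert x (\<Union>(leaves ` blocks_union bs))"
proof (induction bs X rule: marked_blocks.induct)
  case (2 S i bs X)
  then have "finite S"
    by (auto intro: card_ge_0_finite)
  with 2 show ?case by auto
qed simp

lemma tdeg_spine:
  "marked_blocks bs X \<Longrightarrow> tdeg (spine x bs) = sum_list (map snd bs) + sum tdeg (blocks_union bs)"
proof (induction bs X rule: marked_blocks.induct)
  case (2 S i bs X)
  then have "finite S" "finite (blocks_union bs)" "S \<inter> blocks_union bs = {}"
    using marked_blocks_finite_union marked_blocks_subset[of bs "X - S"]
    by (auto intro: card_ge_0_finite)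
  moreover have "tdeg (spine x ((S, i) # bs)) = i + tdeg (spine x bs) + sum tdeg S"
    by (simp add: sum_unfold_sum_mset)
  ultimately show ?case
    using 2 by (simp add: sum.union_disjoint)
qed simp

lemma admissible_spine_iff:
  "marked_blocks bs X \<Longrightarrow> admissible_tree (spine x bs) \<longleftrightarrow>
     1 \<le> x \<and> admissible_family (blocks_union bs) \<and> x \<notin> \<Union>(leaves ` blocks_union bs)"
proof (induction bs X rule: marked_blocks.induct)
  case (2 S i bs X)
  let ?s = "spine x bs" and ?U = "blocks_union bs"
  have S: "finite S" "2 \<le> card S" "1 \<le> i" "i < card S" and "marked_blocks bs (X - S)"
    using "2.prems" by (auto intro: card_ge_0_finite)
  then have SU: "S \<inter> ?U = {}" and ls: "leaves ?s = insert x (\<Union>(leaves ` ?U))"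
    using marked_blocks_subset[of bs "X - S"] leaves_spine[of bs "X - S" x] by auto
  have "admissible_tree (spine x ((S, i) # bs)) \<longleftrightarrow>
      ?s \<notin> S \<and> admissible_tree ?s \<and> (\<forall>t\<in>S. admissible_tree t) \<and>
      disjoint_family_on leaves (insert ?s S)"
    using S by (auto simp: admissible_tree_Node distinct_mset_add_mset distinct_mset_mset_set)
  also have "\<dots> \<longleftrightarrow> 1 \<le> x \<and> admissible_family (S \<union> ?U) \<and> x \<notin> \<Union>(leaves ` (S \<union> ?U))"
  proof -
    have IH: "admissible_tree ?s \<longleftrightarrow> 1 \<le> x \<and> admissible_family ?U \<and> x \<notin> \<Union>(leaves ` ?U)"
      using "2.IH"[OF \<open>marked_blocks bs (X - S)\<close>] .
    have "disjoint_family_on leaves (insert ?s S) \<longleftrightarrow>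
        x \<notin> \<Union>(leaves ` S) \<and> \<Union>(leaves ` S) \<inter> \<Union>(leaves ` ?U) = {} \<and> disjoint_family_on leaves S"
      if "?s \<notin> S"
      unfolding disjoint_family_on_insert[OF that] ls by blast
    moreover have "x \<notin> \<Union>(leaves ` S) \<Longrightarrow> ?s \<notin> S"
      using ls by blast
    moreover have "admissible_family (S \<union> ?U) \<longleftrightarrow>
        (\<forall>t\<in>S. admissible_tree t) \<and> disjoint_family_on leaves S \<and> admissible_family ?U \<and>
        \<Union>(leaves ` S) \<inter> \<Union>(leaves ` ?U) = {}"
      using admissible_family_Un[OF SU] by (simp add: admissible_family_def)
    moreover have "x \<notin> \<Union>(leaves ` (S \<union> ?U)) \<longleftrightarrow> x \<notin> \<Union>(leaves ` S) \<and> x \<notin> \<Union>(leaves ` ?U)"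
      by blast
    ultimately show ?thesis
      unfolding IH by argo
  qed
  finally show ?case by simp
qed (simp add: admissible_family_def disjoint_family_on_def)

lemma spine_inj:
  assumes "marked_blocks bs X" "marked_blocks bs' X'"
    and "x \<notin> \<Union>(leaves ` X)" "x \<notin> \<Union>(leaves ` X')"
    and "spine x bs = spine x bs'"
  shows "bs = bs'"
  using assms
proof (induction bs X arbitrary: bs' X' rule: marked_blocks.induct)
  case (1 X)
  then show ?case by (cases bs') auto
next
  case (2 S i bs X)
  have "bs' \<noteq> []"
    using "2.prems"(5) by auto
  then obtain S' i' bs'' where bs': "bs' = (S', i') # bs''"
    by (metis list.exhaust surj_pair)
  have fin: "finite S" "finite S'"
    using "2.prems"(1,2) bs' by (auto intro: card_ge_0_finite)
  have node: "i = i'" "add_mset (spine x bs) (mset_set S) = add_mset (spine x bs'') (mset_set S')"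
    using "2.prems"(5) bs' by auto
  have "x \<in> leaves (spine x bs)"
    using leaves_spine "2.prems"(1) by fastforce
  then have "spine x bs \<notin> S'"
    using "2.prems"(2,4) bs' by auto
  then have "spine x bs = spine x bs''"
    using node(2) fin by (metis finite_set_mset_mset_set insert_noteq_member)
  moreover from this have "S = S'"
    using node(2) fin by simp
  moreover have "marked_blocks bs'' (X' - S')"
    using "2.prems"(2) bs' by simp
  ultimately show ?case
    using "2.IH" "2.prems" bs' node(1) by fastforce
qed

lemma spine_decomposition:
  "admissible_tree T \<Longrightarrow> x \<in> leaves T \<Longrightarrow> \<exists>bs. spine x bs = T \<and> marked_blocks bs (blocks_union bs)"
proof (induction T)
  case (Leaf a)
  then show ?case
    by (intro exI[of _ "[]"]) simp
next
  case (Node i cs)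
  obtain c where c: "c \<in># cs" "x \<in> leaves c"
    using Node.prems(2) by auto
  have T: "3 \<le> size cs" "1 \<le> i" "i \<le> size cs - 2" "distinct_mset cs"
      "\<forall>c\<in>#cs. admissible_tree c" "disjoint_family_on leaves (set_mset cs)"
    using Node.prems(1) by (simp_all add: admissible_tree_Node)
  then obtain bsc where bsc: "spine x bsc = c" "marked_blocks bsc (blocks_union bsc)"
    using Node.IH c by blast
  define S where "S = set_mset cs - {c}"
  have cs: "cs = add_mset c (mset_set S)"
    using T(4) c(1) unfolding S_def
    by (metis mset_set_set_mset mset_set.remove finite_set_mset)
  have SU: "S \<inter> blocks_union bsc = {}"
  proof (rule disjoint_iff[THEN iffD2], intro allI impI notI)
    fix u
    assume u: "u \<in> S" "u \<in> blocks_union bsc"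
    then have "leaves u \<subseteq> leaves c"
      using leaves_spine[OF bsc(2), of x] bsc(1) by blast
    moreover have "leaves u \<inter> leaves c = {}"
      using disjoint_family_onD[OF T(6)] c(1) u(1) by (simp add: S_def)
    moreover have "leaves u \<noteq> {}"
      using T(5) leaves_nonempty u(1) by (simp add: S_def admissible_tree_def)
    ultimately show False
      by blast
  qed
  have "card S = size cs - 1"
    using arg_cong[OF cs, of size] by simp
  moreover have "(S \<union> blocks_union bsc) - S = blocks_union bsc"
    using SU by blast
  ultimately have "marked_blocks ((S, i) # bsc) (blocks_union ((S, i) # bsc))"
    using T(1-3) bsc(2) by simp linarith
  moreover have "spine x ((S, i) # bsc) = Node i cs"
    using bsc(1) cs by simp
  ultimately show ?case
    by blast
qed

section \<open>Grafting a spine onto a forest\<close>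

lemma admissible_family_mono: "admissible_family X \<Longrightarrow> Y \<subseteq> X \<Longrightarrow> admissible_family Y"
  by (auto simp: admissible_family_def intro: disjoint_family_on_mono)

lemma Suc_notin_forest_leaves: "F \<in> admissible_forests n \<Longrightarrow> Suc n \<notin> \<Union>(leaves ` F)"
  by (simp add: admissible_forests_def)

lemma spine_notin_forest:
  "F \<in> admissible_forests n \<Longrightarrow> marked_blocks bs X \<Longrightarrow> spine (Suc n) bs \<notin> F"
  using leaves_spine[of bs X "Suc n"] Suc_notin_forest_leaves by blast

definition graft_spine :: "nat \<Rightarrow> ltree set \<times> (ltree set \<times> nat) list \<Rightarrow> ltree set" where
  "graft_spine x = (\<lambda>(F, bs). insert (spine x bs) (F - blocks_union bs))"

lemma graft_spine_admissible:
  assumes F: "F \<in> admissible_forests n" and bs: "marked_blocks bs F"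
  shows "graft_spine (Suc n) (F, bs) \<in> admissible_forests (Suc n)"
proof -
  let ?s = "spine (Suc n) bs" and ?U = "blocks_union bs"
  have F': "finite F" "admissible_family F" "\<Union>(leaves ` F) = {1..n}"
    using F by (simp_all add: admissible_forests_iff)
  have UF: "?U \<subseteq> F"
    using marked_blocks_subset[OF bs] .
  have ls: "leaves ?s = insert (Suc n) (\<Union>(leaves ` ?U))"
    using leaves_spine[OF bs] .
  have "Suc n \<notin> \<Union>(leaves ` F)"
    using Suc_notin_forest_leaves[OF F] .
  then have "admissible_tree ?s"
    using admissible_spine_iff[OF bs] admissible_family_mono[OF F'(2) UF] UF by auto
  moreover have "leaves ?s \<inter> \<Union>(leaves ` (F - ?U)) = {}"
    using admissible_family_Un[of ?U "F - ?U"] F'(2) UF ls \<open>Suc n \<notin> \<Union>(leaves ` F)\<close>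
    by (auto simp: Un_absorb1)
  moreover have "?s \<notin> F - ?U"
    using spine_notin_forest[OF F bs] by blast
  ultimately have "admissible_family (insert ?s (F - ?U))"
    using admissible_family_mono[OF F'(2) Diff_subset] by (simp add: admissible_family_insert)
  moreover have "\<Union>(leaves ` insert ?s (F - ?U)) = insert (Suc n) (\<Union>(leaves ` F))"
    using UF ls by blast
  ultimately show ?thesis
    using F'(1,3) by (simp add: graft_spine_def admissible_forests_iff atLeastAtMostSuc_conv)
qed

lemma fdeg_graft_spine:
  assumes F: "F \<in> admissible_forests n" and bs: "marked_blocks bs F"
  shows "fdeg (graft_spine (Suc n) (F, bs)) = fdeg F + sum_list (map snd bs)"
proof -
  have "finite F"
    using F by (simp add: admissible_forests_def)
  then have "fdeg F = sum tdeg (F - blocks_union bs) + sum tdeg (blocks_union bs)"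
    using marked_blocks_subset[OF bs] by (simp add: fdeg_def sum.subset_diff)
  then show ?thesis
    using spine_notin_forest[OF F bs] \<open>finite F\<close> tdeg_spine[OF bs]
    by (simp add: graft_spine_def fdeg_def)
qed

lemma inj_on_graft_spine:
  "inj_on (graft_spine (Suc n)) (SIGMA F:admissible_forests n. {bs. marked_blocks bs F})"
proof (rule inj_onI, clarsimp)
  fix F bs F' bs'
  assume F: "F \<in> admissible_forests n" "marked_blocks bs F"
    and F': "F' \<in> admissible_forests n" "marked_blocks bs' F'"
    and eq: "graft_spine (Suc n) (F, bs) = graft_spine (Suc n) (F', bs')"
  have "spine (Suc n) bs = spine (Suc n) bs'"
    using eq spine_notin_forest[OF F'(1) F(2)] by (auto simp: graft_spine_def)
  then have "bs = bs'"
    using spine_inj F F' Suc_notin_forest_leaves by blast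
  moreover have "F - blocks_union bs = F' - blocks_union bs"
    using eq spine_notin_forest[OF F] spine_notin_forest[OF F'] \<open>bs = bs'\<close>
    by (auto simp: graft_spine_def insert_eq_iff)
  ultimately show "F = F' \<and> bs = bs'"
    using marked_blocks_subset F(2) F'(2) by blast
qed

lemma graft_spine_surj:
  assumes G: "G \<in> admissible_forests (Suc n)"
  shows "G \<in> graft_spine (Suc n) ` (SIGMA F:admissible_forests n. {bs. marked_blocks bs F})"
proof -
  have G': "finite G" "admissible_family G" "\<Union>(leaves ` G) = {1..Suc n}"
    using G by (simp_all add: admissible_forests_iff)
  have "Suc n \<in> \<Union>(leaves ` G)"
    using G'(3) by simp
  then obtain T where T: "T \<in> G" "Suc n \<in> leaves T"
    by blast
  then have "admissible_tree T"
    using G'(2) by (simp add: admissible_family_def)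
  then obtain bs where bs: "spine (Suc n) bs = T" "marked_blocks bs (blocks_union bs)"
    using spine_decomposition T(2) by blast
  let ?U = "blocks_union bs" and ?R = "G - {T}"
  have U: "admissible_family ?U" "Suc n \<notin> \<Union>(leaves ` ?U)"
    using admissible_spine_iff[OF bs(2)] bs(1) \<open>admissible_tree T\<close> by auto
  have lT: "leaves T = insert (Suc n) (\<Union>(leaves ` ?U))"
    using leaves_spine[OF bs(2), of "Suc n"] bs(1) by simp
  have R: "admissible_family ?R" "leaves T \<inter> \<Union>(leaves ` ?R) = {}"
    using admissible_family_insert[of T ?R] G'(2) T(1) by (simp_all add: insert_absorb)
  have UR: "?U \<inter> ?R = {}"
  proof (rule disjoint_iff[THEN iffD2], intro allI impI notI)
    fix u
    assume "u \<in> ?U" "u \<in> ?R"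
    then have "leaves u = {}" and "admissible_tree u"
      using lT R(2) U(1) by (auto simp: admissible_family_def)
    then show False
      using leaves_nonempty by (simp add: admissible_tree_def)
  qed
  define F where "F = ?U \<union> ?R"
  have "admissible_family F"
    unfolding F_def admissible_family_Un[OF UR] using U(1) R lT by blast
  moreover have "\<Union>(leaves ` F) = {1..n}"
  proof -
    have "\<Union>(leaves ` ?U) = leaves T - {Suc n}"
      using lT U(2) by blast
    moreover have "Suc n \<notin> \<Union>(leaves ` ?R)"
      using R(2) T(2) by blast
    ultimately have "\<Union>(leaves ` F) = \<Union>(leaves ` G) - {Suc n}"
      using T(1) unfolding F_def by blast
    then show ?thesis
      using G'(3) by auto
  qed
  ultimately have "F \<in> admissible_forests n"
    using G'(1) marked_blocks_finite_union[OF bs(2)] by (simp add: admissible_forests_iff F_def)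
  moreover have "marked_blocks bs F"
    using marked_blocks_mono[OF bs(2)] by (simp add: F_def)
  moreover have "graft_spine (Suc n) (F, bs) = G"
    using UR T(1) bs(1) by (auto simp: graft_spine_def F_def)
  ultimately show ?thesis
    by force
qed

lemma bij_betw_graft_spine:
  "bij_betw (graft_spine (Suc n)) (SIGMA F:admissible_forests n. {bs. marked_blocks bs F})
     (admissible_forests (Suc n))"
  unfolding bij_betw_def
  using inj_on_graft_spine graft_spine_admissible graft_spine_surj by fastforce

lemma bij_betw_Sigma_fiberwise:
  assumes "\<And>x. x \<in> A \<Longrightarrow> bij_betw (f x) (B x) (C x)"
  shows "bij_betw (\<lambda>(x, y). (x, f x y)) (Sigma A B) (Sigma A C)"
proof (rule bij_betw_byWitness[where f' = "\<lambda>(x, z). (x, inv_into (B x) (f x) z)"])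
  show "\<forall>p\<in>Sigma A B. (\<lambda>(x, z). (x, inv_into (B x) (f x) z)) ((\<lambda>(x, y). (x, f x y)) p) = p"
    using assms by (auto simp: bij_betw_def)
  show "\<forall>p\<in>Sigma A C. (\<lambda>(x, y). (x, f x y)) ((\<lambda>(x, z). (x, inv_into (B x) (f x) z)) p) = p"
    using assms by (auto simp: bij_betw_def f_inv_into_f)
  show "(\<lambda>(x, y). (x, f x y)) ` Sigma A B \<subseteq> Sigma A C"
    using assms by (auto simp: bij_betw_def)
  show "(\<lambda>(x, z). (x, inv_into (B x) (f x) z)) ` Sigma A C \<subseteq> Sigma A B"
    using assms by (auto simp: bij_betw_def inv_into_into)
qed

theorem mainTheorem3:
  fixes n :: nat
  assumes "1 \<le> n"
  shows "\<exists>\<Psi>. bij_betw \<Psi> {(F, s). F \<in> admissible_forests n \<and> s \<in> perms (card F)}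
                          (admissible_forests (Suc n))
          \<and> (\<forall>(F, s) \<in> {(F, s). F \<in> admissible_forests n \<and> s \<in> perms (card F)}.
               fdeg (\<Psi> (F, s)) = fdeg F + lec s)"
proof -
  have "\<forall>F\<in>admissible_forests n. \<exists>g. bij_betw g (perms (card F)) {bs. marked_blocks bs F} \<and>
      (\<forall>s\<in>perms (card F). sum_list (map snd (g s)) = lec s)"
    by (metis perms_marked_blocks_bij admissible_forests_iff)
  then obtain g where g: "\<And>F. F \<in> admissible_forests n \<Longrightarrow>
      bij_betw (g F) (perms (card F)) {bs. marked_blocks bs F} \<and>
      (\<forall>s\<in>perms (card F). sum_list (map snd (g F s)) = lec s)"
    by metis
  define \<Psi> where "\<Psi> = graft_spine (Suc n) \<circ> (\<lambda>(F, s). (F, g F s))"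
  have dom: "{(F, s). F \<in> admissible_forests n \<and> s \<in> perms (card F)} =
      (SIGMA F:admissible_forests n. perms (card F))"
    by auto
  have "bij_betw \<Psi> (SIGMA F:admissible_forests n. perms (card F)) (admissible_forests (Suc n))"
    unfolding \<Psi>_def using g
    by (intro bij_betw_trans[OF bij_betw_Sigma_fiberwise bij_betw_graft_spine]) blast
  moreover have "fdeg (\<Psi> (F, s)) = fdeg F + lec s"
    if "F \<in> admissible_forests n" "s \<in> perms (card F)" for F s
    using fdeg_graft_spine[OF that(1)] g[OF that(1)] that(2) bij_betw_apply
    by (fastforce simp: \<Psi>_def)
  ultimately show ?thesis
    unfolding dom by blast
qed

end
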